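(* Let $\omega\in\Omega_+$. If $0$ is $\omega$-transient, then $P_{0,\omega}[X_n>0\text{ for all } n>0]>0$.
   Context: Cookie environments: $\Omega_+=([1/2,1]^{\mathbb N})^{\mathbb Z}$. $P_{x,\omega}$ is the law of the nearest-neighbor process $(X_n)_{n\ge0}$ with $X_0=x$ which, on its $i$-th visit to site $z$, jumps to $z+1$ with probability $\omega(z,i)$ and to $z-1$ otherwise. $R_k=\{X_n=k\text{ i.o.}\}$; a site $y$ is $\omega$-transient if $P_{x,\omega}[R_y]=0$ for all $x\in\mathbb Z$. *)

theory Defs
  imports "HOL-Probability.Probability"
begin

text \<open>Cookie random walk, realised via independent coins (cookie stacks):
  coin (z,i) ~ Bernoulli(omega z i) decides the jump on the i-th visit to z
  (visits counted from 1).\<close>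

fun cookie_hist :: "int \<Rightarrow> (int \<times> nat \<Rightarrow> bool) \<Rightarrow> nat \<Rightarrow> int list" where
  "cookie_hist x \<xi> 0 = [x]"
| "cookie_hist x \<xi> (Suc n) =
     (let h = cookie_hist x \<xi> n; y = last h; k = count_list h y
      in h @ [if \<xi> (y, k) then y + 1 else y - 1])"

definition cookie_walk :: "int \<Rightarrow> (int \<times> nat \<Rightarrow> bool) \<Rightarrow> nat \<Rightarrow> int" where
  "cookie_walk x \<xi> n = last (cookie_hist x \<xi> n)"

definition coin_space :: "(int \<Rightarrow> nat \<Rightarrow> real) \<Rightarrow> (int \<times> nat \<Rightarrow> bool) measure" where
  "coin_space \<omega> = PiM UNIV (\<lambda>zi. measure_pmf (bernoulli_pmf (\<omega> (fst zi) (snd zi))))"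

definition cookie_law :: "(int \<Rightarrow> nat \<Rightarrow> real) \<Rightarrow> int \<Rightarrow> (nat \<Rightarrow> int) measure" where
  "cookie_law \<omega> x = distr (coin_space \<omega>) (PiM UNIV (\<lambda>_. count_space UNIV))
                        (\<lambda>\<xi> n. cookie_walk x \<xi> n)"

definition cookie_env_plus :: "(int \<Rightarrow> nat \<Rightarrow> real) \<Rightarrow> bool" where
  "cookie_env_plus \<omega> \<longleftrightarrow> (\<forall>z i. 1 \<le> i \<longrightarrow> 1/2 \<le> \<omega> z i \<and> \<omega> z i \<le> 1)"

definition R_event :: "int \<Rightarrow> (nat \<Rightarrow> int) set" where
  "R_event k = {X. infinite {n. X n = k}}"

definition omega_transient :: "(int \<Rightarrow> nat \<Rightarrow> real) \<Rightarrow> int \<Rightarrow> bool" where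
  "omega_transient \<omega> y \<longleftrightarrow> (\<forall>x. measure (cookie_law \<omega> x) (R_event y) = 0)"

end

(* Realise the walk on the product space of independent coins, the i-th coin at z being heads with
   probability \<omega> z i \<ge> 1/2. Almost surely (i) 0 is visited only finitely often, by transience,
   (ii) every site has infinitely many heads among its coins, and (iii) the walk does not tend to -\<infinity>:
   the walk stopped at a level L is a submartingale bounded by L, so it goes below x - K before
   reaching L with probability at most (L - x) / K.
   On this event the walk is positive after its last visit to 0: staying negative is impossible, since
   by (ii) infinitely many visits to a site z < 0 force infinitely many visits to z + 1, ..., 0, while
   finitely many visits to every site z \<le> 0 contradict (iii).
   Let N be the number of visits to 1 up to the step after the last visit to 0. Forcing the coin (0, 1)
   and the coins (1, 1), ..., (1, N) to heads yields a walk that never returns to 0. So for some N the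
   event "the forced walk stays positive" has positive probability. It does not depend on the forced
   coins and is therefore independent of the event that they all show heads, which has positive
   probability too; on the intersection the walk itself stays positive. *)

theory Submission
  imports Defs
begin

section \<open>Independent coordinates of a product of probability spaces\<close>

definition depends_only_on :: "('i \<Rightarrow> 'a) set \<Rightarrow> 'i set \<Rightarrow> ('i \<Rightarrow> 'a) set \<Rightarrow> bool" where
  "depends_only_on \<Omega> S E \<longleftrightarrow> (\<forall>\<xi>\<in>E. \<forall>\<eta>\<in>\<Omega>. (\<forall>i\<in>S. \<eta> i = \<xi> i) \<longrightarrow> \<eta> \<in> E)"

lemma (in product_prob_space) measurable_override_on:
  "(\<lambda>(a, b). override_on a b S) \<in> (\<Pi>\<^sub>M i\<in>I. M i) \<Otimes>\<^sub>M (\<Pi>\<^sub>M i\<in>I. M i) \<rightarrow>\<^sub>M (\<Pi>\<^sub>M i\<in>I. M i)"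
proof (rule measurable_PiM_single')
  fix i assume "i \<in> I"
  then have "(\<lambda>p. fst p i) \<in> (\<Pi>\<^sub>M i\<in>I. M i) \<Otimes>\<^sub>M (\<Pi>\<^sub>M i\<in>I. M i) \<rightarrow>\<^sub>M M i"
    and "(\<lambda>p. snd p i) \<in> (\<Pi>\<^sub>M i\<in>I. M i) \<Otimes>\<^sub>M (\<Pi>\<^sub>M i\<in>I. M i) \<rightarrow>\<^sub>M M i"
    by measurable
  then show "(\<lambda>p. (case p of (a, b) \<Rightarrow> override_on a b S) i) \<in> (\<Pi>\<^sub>M i\<in>I. M i) \<Otimes>\<^sub>M (\<Pi>\<^sub>M i\<in>I. M i) \<rightarrow>\<^sub>M M i"
    by (cases "i \<in> S") (simp_all add: override_on_def case_prod_beta')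
qed (auto simp: space_pair_measure space_PiM PiE_iff override_on_def extensional_def)

lemma (in product_prob_space) distr_override_on_PiM:
  "distr ((\<Pi>\<^sub>M i\<in>I. M i) \<Otimes>\<^sub>M (\<Pi>\<^sub>M i\<in>I. M i)) (\<Pi>\<^sub>M i\<in>I. M i) (\<lambda>(a, b). override_on a b S) = (\<Pi>\<^sub>M i\<in>I. M i)"
    (is "distr ?PP ?P ?f = ?P")
proof (rule PiM_eq)
  fix J F assume J: "finite J" "J \<subseteq> I" and F: "\<And>j. j \<in> J \<Longrightarrow> F j \<in> sets (M j)"
  let ?emb = "\<lambda>K. prod_emb I M K (\<Pi>\<^sub>E j\<in>K. F j)"
  have emb_sets: "?emb K \<in> sets ?P" if "K \<subseteq> J" for K
    using that J F by (intro sets_PiM_I) (auto intro: finite_subset)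
  have "?f -` ?emb J \<inter> space ?PP = ?emb (J - S) \<times> ?emb (J \<inter> S)"
    by (auto simp: prod_emb_def space_pair_measure space_PiM PiE_iff override_on_def extensional_def;
        metis)
  then have "emeasure (distr ?PP ?P ?f) (?emb J) = emeasure ?P (?emb (J - S)) * emeasure ?P (?emb (J \<inter> S))"
    using emb_sets[of J] emb_sets[of "J - S"] emb_sets[of "J \<inter> S"]
    by (simp add: emeasure_distr measurable_override_on P.emeasure_pair_measure_Times)
  also have "\<dots> = (\<Prod>j\<in>J - S. emeasure (M j) (F j)) * (\<Prod>j\<in>J \<inter> S. emeasure (M j) (F j))"
    using J F by (subst (1 2) emeasure_PiM_emb) auto
  also have "\<dots> = (\<Prod>j\<in>J. emeasure (M j) (F j))"
    using J(1) by (simp add: prod.Int_Diff[of J _ S] mult.commute)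
  finally show "emeasure (distr ?PP ?P ?f) (?emb J) = (\<Prod>j\<in>J. emeasure (M j) (F j))" .
qed simp

lemma (in product_prob_space) measure_PiM_Int_eq_mult:
  assumes E: "E \<in> sets (\<Pi>\<^sub>M i\<in>I. M i)" "depends_only_on (space (\<Pi>\<^sub>M i\<in>I. M i)) (- S) E"
    and F: "F \<in> sets (\<Pi>\<^sub>M i\<in>I. M i)" "depends_only_on (space (\<Pi>\<^sub>M i\<in>I. M i)) S F"
  shows "measure (\<Pi>\<^sub>M i\<in>I. M i) (E \<inter> F) = measure (\<Pi>\<^sub>M i\<in>I. M i) E * measure (\<Pi>\<^sub>M i\<in>I. M i) F"
proof -
  let ?P = "\<Pi>\<^sub>M i\<in>I. M i"
  let ?PP = "?P \<Otimes>\<^sub>M ?P"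
  let ?f = "\<lambda>(a, b). override_on a b S"
  have "?f -` (E \<inter> F) \<inter> space ?PP = E \<times> F"
  proof -
    have in_space: "override_on a b S \<in> space ?P" if "a \<in> space ?P" "b \<in> space ?P" for a b
      using measurable_space[OF measurable_override_on, of "(a, b)"] that
      by (simp add: space_pair_measure)
    have on_E: "override_on a b S \<in> E \<longleftrightarrow> a \<in> E" if "a \<in> space ?P" "b \<in> space ?P" for a b
      using E(2) in_space[OF that] that sets.sets_into_space[OF E(1)]
      unfolding depends_only_on_def by (metis ComplD override_on_apply_notin)
    have on_F: "override_on a b S \<in> F \<longleftrightarrow> b \<in> F" if "a \<in> space ?P" "b \<in> space ?P" for a b
      using F(2) in_space[OF that] that sets.sets_into_space[OF F(1)]
      unfolding depends_only_on_def by (metis override_on_apply_in subset_iff)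
    have "p \<in> ?f -` (E \<inter> F) \<inter> space ?PP \<longleftrightarrow> p \<in> E \<times> F" for p
      using sets.sets_into_space[OF E(1)] sets.sets_into_space[OF F(1)]
      by (cases p) (auto simp: space_pair_measure on_E on_F subset_iff)
    then show ?thesis by blast
  qed
  then have "measure ?P (E \<inter> F) = measure ?PP (E \<times> F)"
    using E F measurable_override_on[of S]
    by (subst (1) distr_override_on_PiM[of S, symmetric]) (simp add: measure_distr)
  also have "\<dots> = measure ?P E * measure ?P F"
    using E F by (simp add: measure_def P.emeasure_pair_measure_Times enn2real_mult)
  finally show ?thesis .
qed

section \<open>The walk as a function of the coins\<close>

definition visits :: "int \<Rightarrow> (int \<times> nat \<Rightarrow> bool) \<Rightarrow> nat \<Rightarrow> int \<Rightarrow> nat" where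
  "visits x \<xi> n z = count_list (cookie_hist x \<xi> n) z"

definition next_coin :: "int list \<Rightarrow> int \<times> nat" where
  "next_coin h = (last h, count_list h (last h))"

definition extend_hist :: "int list \<Rightarrow> bool \<Rightarrow> int list" where
  "extend_hist h b = h @ [if b then last h + 1 else last h - 1]"

lemma cookie_hist_Suc_extend:
  "cookie_hist x \<xi> (Suc n) = extend_hist (cookie_hist x \<xi> n) (\<xi> (next_coin (cookie_hist x \<xi> n)))"
  by (simp add: Let_def extend_hist_def next_coin_def)

lemma cookie_hist_Suc_append:
  "cookie_hist x \<xi> (Suc n) = cookie_hist x \<xi> n @ [cookie_walk x \<xi> (Suc n)]"
  by (simp add: cookie_walk_def Let_def)

declare cookie_hist.simps(2)[simp del]

lemma cookie_walk_0 [simp]: "cookie_walk x \<xi> 0 = x"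
  by (simp add: cookie_walk_def)

lemma next_coin_cookie_hist:
  "next_coin (cookie_hist x \<xi> n) = (cookie_walk x \<xi> n, visits x \<xi> n (cookie_walk x \<xi> n))"
  by (simp add: next_coin_def visits_def cookie_walk_def)

lemma cookie_walk_Suc:
  "cookie_walk x \<xi> (Suc n) =
     (if \<xi> (cookie_walk x \<xi> n, visits x \<xi> n (cookie_walk x \<xi> n))
      then cookie_walk x \<xi> n + 1 else cookie_walk x \<xi> n - 1)"
  by (simp add: cookie_walk_def visits_def Let_def cookie_hist.simps(2))

lemma cookie_hist_eq_map: "cookie_hist x \<xi> n = map (cookie_walk x \<xi>) [0..<Suc n]"
  by (induction n) (simp_all add: cookie_hist_Suc_append)

lemma set_cookie_hist: "set (cookie_hist x \<xi> n) = cookie_walk x \<xi> ` {..n}"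
  by (auto simp: cookie_hist_eq_map simp del: upt_Suc)

lemma abs_cookie_walk_Suc_diff: "\<bar>cookie_walk x \<xi> (Suc n) - cookie_walk x \<xi> n\<bar> = 1"
  by (simp add: cookie_walk_Suc)

lemma cookie_walk_Suc_le: "cookie_walk x \<xi> (Suc n) \<le> cookie_walk x \<xi> n + 1"
  and cookie_walk_Suc_ge: "cookie_walk x \<xi> (Suc n) \<ge> cookie_walk x \<xi> n - 1"
  by (simp_all add: cookie_walk_Suc)

lemma abs_cookie_walk_diff_le: "\<bar>cookie_walk x \<xi> n - x\<bar> \<le> int n"
proof (induction n)
  case (Suc n)
  then show ?case using abs_cookie_walk_Suc_diff[of x \<xi> n] by linarith
qed simp

lemma visits_0: "visits x \<xi> 0 z = (if z = x then 1 else 0)"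
  by (simp add: visits_def)

lemma visits_Suc:
  "visits x \<xi> (Suc n) z = visits x \<xi> n z + (if cookie_walk x \<xi> (Suc n) = z then 1 else 0)"
  by (simp add: visits_def cookie_hist_Suc_append)

lemma visits_current_pos: "visits x \<xi> n (cookie_walk x \<xi> n) \<ge> 1"
  by (cases n) (simp_all add: visits_0 visits_Suc)

lemma visits_mono: "m \<le> n \<Longrightarrow> visits x \<xi> m z \<le> visits x \<xi> n z"
  by (induction n rule: dec_induct) (auto simp: visits_Suc)

lemma visits_less_current: "k < n \<Longrightarrow> visits x \<xi> k (cookie_walk x \<xi> n) < visits x \<xi> n (cookie_walk x \<xi> n)"
  by (cases n) (auto simp: visits_Suc less_Suc_eq_le intro: visits_mono le_imp_less_Suc)

lemma cookie_hist_cong: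
  assumes "\<And>k. k < n \<Longrightarrow> \<eta> (cookie_walk x \<xi> k, visits x \<xi> k (cookie_walk x \<xi> k))
                              = \<xi> (cookie_walk x \<xi> k, visits x \<xi> k (cookie_walk x \<xi> k))"
  shows "cookie_hist x \<eta> n = cookie_hist x \<xi> n"
  using assms
proof (induction n)
  case (Suc n)
  then have "cookie_hist x \<eta> n = cookie_hist x \<xi> n" by simp
  moreover from this have "visits x \<eta> n = visits x \<xi> n" "cookie_walk x \<eta> n = cookie_walk x \<xi> n"
    by (simp_all add: visits_def cookie_walk_def fun_eq_iff)
  ultimately show ?case
    using Suc.prems[of n] by (simp add: cookie_hist_Suc_append cookie_walk_Suc)
qed simp

lemma length_cookie_hist: "length (cookie_hist x \<xi> n) = Suc n"
  by (simp add: cookie_hist_eq_map)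

lemma set_cookie_hist_subset: "set (cookie_hist x \<xi> n) \<subseteq> {x - int n..x + int n}"
proof -
  have "cookie_walk x \<xi> k \<in> {x - int n..x + int n}" if "k \<le> n" for k
    using abs_cookie_walk_diff_le[of x \<xi> k] that unfolding atLeastAtMost_iff by linarith
  then show ?thesis unfolding set_cookie_hist by blast
qed

lemma finite_range_cookie_hist: "finite (range (\<lambda>\<xi>. cookie_hist x \<xi> n))"
proof (rule finite_subset)
  show "range (\<lambda>\<xi>. cookie_hist x \<xi> n) \<subseteq> {h. set h \<subseteq> {x - int n..x + int n} \<and> length h = Suc n}"
    using set_cookie_hist_subset length_cookie_hist by auto
qed (rule finite_lists_length_eq, simp)

section \<open>Deterministic behaviour of paths\<close>

lemma visits_unbounded:
  assumes "infinite {n. cookie_walk x \<xi> n = z}"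
  shows "\<exists>n. visits x \<xi> n z \<ge> i"
proof (induction i)
  case (Suc i)
  then obtain n where n: "visits x \<xi> n z \<ge> i" by blast
  obtain m where "m > n" "cookie_walk x \<xi> m = z"
    using assms unfolding infinite_nat_iff_unbounded by auto
  then obtain m' where m': "m = Suc m'" "m' \<ge> n" "cookie_walk x \<xi> (Suc m') = z"
    by (cases m) auto
  then have "visits x \<xi> m z \<ge> Suc i"
    using n visits_mono[of n m' x \<xi> z] by (simp add: visits_Suc)
  then show ?case by blast
qed simp

lemma visits_attains:
  assumes "visits x \<xi> n z \<ge> i" "i \<ge> 1"
  shows "\<exists>m. cookie_walk x \<xi> m = z \<and> visits x \<xi> m z = i"
  using assms(1)
proof (induction n)
  case 0
  then show ?case using assms(2) by (auto simp: visits_0 split: if_splits intro: exI[of _ 0])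
next
  case (Suc n)
  show ?case
  proof (cases "visits x \<xi> n z \<ge> i")
    case False
    with Suc.prems have "cookie_walk x \<xi> (Suc n) = z \<and> visits x \<xi> (Suc n) z = i"
      by (auto simp: visits_Suc split: if_splits)
    then show ?thesis by blast
  qed (use Suc.IH in blast)
qed

lemma infinite_visits_Suc:
  assumes inf: "infinite {n. cookie_walk x \<xi> n = z}" and heads: "\<forall>i0. \<exists>i\<ge>i0. \<xi> (z, i)"
  shows "infinite {n. cookie_walk x \<xi> n = z + 1}"
proof
  assume "finite {n. cookie_walk x \<xi> n = z + 1}"
  then obtain N where N: "\<And>n. cookie_walk x \<xi> n = z + 1 \<Longrightarrow> n < N"
    unfolding finite_nat_set_iff_bounded by auto
  obtain i where i: "i > visits x \<xi> N z" "\<xi> (z, i)"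
    using heads by (meson less_eq_Suc_le)
  obtain n where "visits x \<xi> n z \<ge> i" using visits_unbounded[OF inf] by blast
  then obtain m where m: "cookie_walk x \<xi> m = z" "visits x \<xi> m z = i"
    using visits_attains i(1) by (metis less_one not_le not_less0)
  have "m > N"
    using visits_mono[of m N x \<xi> z] m i by (meson leI not_less)
  moreover have "cookie_walk x \<xi> (Suc m) = z + 1"
    using m i by (simp add: cookie_walk_Suc)
  ultimately show False using N[of "Suc m"] by simp
qed

lemma infinite_visits_mono:
  assumes "infinite {n. cookie_walk x \<xi> n = z}" "z \<le> w" and heads: "\<forall>y i0. \<exists>i\<ge>i0. \<xi> (y, i)"
  shows "infinite {n. cookie_walk x \<xi> n = w}"
  using assms(2,1)
proof (induction w rule: int_ge_induct)
  case (step w)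
  then show ?case using infinite_visits_Suc heads by blast
qed

lemma last_visit_split:
  assumes "finite {n. cookie_walk x \<xi> n = x}"
  shows "\<exists>t. cookie_walk x \<xi> t = x \<and>
           ((\<forall>n>t. cookie_walk x \<xi> n > x) \<or> (\<forall>n>t. cookie_walk x \<xi> n < x))"
proof -
  define t where "t = Max {n. cookie_walk x \<xi> n = x}"
  have "0 \<in> {n. cookie_walk x \<xi> n = x}" by simp
  then have t: "cookie_walk x \<xi> t = x"
    using Max_in[OF assms] unfolding t_def by blast
  have off: "cookie_walk x \<xi> n \<noteq> x" if "n > t" for n
    using Max_ge[OF assms, of n] that unfolding t_def by force
  consider "cookie_walk x \<xi> (Suc t) = x + 1" | "cookie_walk x \<xi> (Suc t) = x - 1"
    using abs_cookie_walk_Suc_diff[of x \<xi> t] t by linarith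
  then show ?thesis
  proof cases
    case 1
    have "cookie_walk x \<xi> n > x" if "Suc t \<le> n" for n
      using that
    proof (induction n rule: dec_induct)
      case (step n)
      then show ?case using cookie_walk_Suc_ge[of x \<xi> n] off[of "Suc n"] by simp
    qed (simp add: 1)
    then show ?thesis using t by (auto simp: Suc_le_eq)
  next
    case 2
    have "cookie_walk x \<xi> n < x" if "Suc t \<le> n" for n
      using that
    proof (induction n rule: dec_induct)
      case (step n)
      then show ?case using cookie_walk_Suc_le[of x \<xi> n] off[of "Suc n"] by simp
    qed (simp add: 2)
    then show ?thesis using t by (auto simp: Suc_le_eq)
  qed
qed

lemma filterlim_at_bot_if_finite_level_sets:
  fixes f :: "nat \<Rightarrow> int"
  assumes "eventually (\<lambda>n. f n \<le> a) sequentially" and "\<And>z. z \<le> a \<Longrightarrow> finite {n. f n = z}"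
  shows "filterlim f at_bot sequentially"
  unfolding filterlim_at_bot
proof
  fix Z :: int
  have "finite (\<Union>z\<in>{Z..a}. {n. f n = z})"
    using assms(2) by auto
  then obtain N where "\<And>n. f n \<in> {Z..a} \<Longrightarrow> n < N"
    unfolding finite_nat_set_iff_bounded by blast
  then have "eventually (\<lambda>n. f n \<notin> {Z..a}) sequentially"
    unfolding eventually_sequentially by (meson not_le)
  with assms(1) show "eventually (\<lambda>n. f n \<le> Z) sequentially"
    by eventually_elim auto
qed

lemma bounded_above_if_filterlim_at_bot:
  fixes f :: "nat \<Rightarrow> int"
  assumes "filterlim f at_bot sequentially"
  shows "\<exists>L. \<forall>n. f n < L"
proof -
  obtain N where N: "\<And>n. n \<ge> N \<Longrightarrow> f n \<le> 0"
    using assms unfolding filterlim_at_bot eventually_sequentially by blast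
  have "f n < max 0 (Max (f ` {..N})) + 1" for n
  proof (cases "n \<le> N")
    case True
    then have "f n \<le> Max (f ` {..N})" by (intro Max_ge) auto
    then show ?thesis by linarith
  qed (use N[of n] in linarith)
  then show ?thesis by blast
qed

section \<open>Forcing coins to heads\<close>

definition escape_coins :: "nat \<Rightarrow> (int \<times> nat) set" where
  "escape_coins N = insert (0, 1) ({1} \<times> {1..N})"

locale positive_after_last_zero =
  fixes \<xi> :: "int \<times> nat \<Rightarrow> bool" and t :: nat
  assumes zero_at_t: "cookie_walk 0 \<xi> t = 0"
    and positive_after_t: "\<And>n. n > t \<Longrightarrow> cookie_walk 0 \<xi> n > 0"
begin

abbreviation "W \<equiv> cookie_walk 0 \<xi>"
abbreviation "V \<equiv> visits 0 \<xi>"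
abbreviation "N \<equiv> V (Suc t) 1"
abbreviation "\<xi>' \<equiv> override_on \<xi> (\<lambda>_. True) (escape_coins N)"
abbreviation "W' \<equiv> cookie_walk 0 \<xi>'"
abbreviation "V' \<equiv> visits 0 \<xi>'"

lemma walk_Suc_t: "W (Suc t) = 1" "W (Suc (Suc t)) = 2"
proof -
  have "W (Suc t) > 0" "W (Suc (Suc t)) > 0" using positive_after_t by auto
  then show "W (Suc t) = 1" "W (Suc (Suc t)) = 2"
    using cookie_walk_Suc_le[of 0 \<xi> t] abs_cookie_walk_Suc_diff[of 0 \<xi> "Suc t"] zero_at_t by auto
qed

(* The coins at 1 read after time t + 1 are heads, because W steps from 1 to 2 after time t. *)
lemma late_coins_at_one: "N < k \<Longrightarrow> k \<le> V n 1 \<Longrightarrow> \<xi> (1, k)"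
proof (induction n arbitrary: k)
  case 0
  then show ?case using visits_mono[of 0 "Suc t" 0 \<xi> 1] by simp
next
  case (Suc n)
  show ?case
  proof (cases "k \<le> V n 1")
    case False
    then have at_one: "W (Suc n) = 1" and k: "k = V (Suc n) 1"
      using Suc.prems by (auto simp: visits_Suc split: if_splits)
    have "Suc n > Suc t"
      using visits_mono[of "Suc n" "Suc t" 0 \<xi> 1] Suc.prems k by (meson not_le not_less)
    then have "W (Suc (Suc n)) > 0" using positive_after_t by simp
    then show ?thesis using at_one k by (simp add: cookie_walk_Suc[of 0 \<xi> "Suc n"] split: if_splits)
  qed (use Suc in blast)
qed

lemma excursion_from_one:
  assumes "W n = 1"
  shows "\<exists>m\<ge>n. W m = 1 \<and> W (Suc m) = 2 \<and> (\<forall>r. n \<le> r \<and> r \<le> m \<longrightarrow> W r \<le> 1)"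
proof -
  let ?up = "\<lambda>m. m \<ge> n \<and> W m = 1 \<and> W (Suc m) = 2"
  have "\<exists>m. ?up m"
  proof (cases "n > t")
    case True
    then have "W (Suc n) = 2"
      using positive_after_t[of "Suc n"] assms abs_cookie_walk_Suc_diff[of 0 \<xi> n] by auto
    then show ?thesis using assms by auto
  next
    case False
    then show ?thesis using walk_Suc_t by (intro exI[of _ "Suc t"]) auto
  qed
  define m where "m = (LEAST m. ?up m)"
  have m: "?up m"
    unfolding m_def by (rule LeastI_ex) fact
  have "W r \<le> 1" if "n \<le> r" "r \<le> m" for r
    using that
  proof (induction r rule: dec_induct)
    case (step r)
    have "\<not> ?up r" using not_less_Least[of r ?up] step unfolding m_def by auto
    then show ?case
      using step abs_cookie_walk_Suc_diff[of 0 \<xi> r] cookie_walk_Suc_le[of 0 \<xi> r] by auto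
  qed (simp add: assms)
  then show ?thesis using m by blast
qed

lemma visits_unchanged_while_low:
  assumes "n \<le> m" "\<forall>r. n < r \<and> r \<le> m \<longrightarrow> W r \<le> 1" "z \<ge> 2"
  shows "V m z = V n z"
  using assms(1,2)
proof (induction m rule: dec_induct)
  case (step k)
  have "W (Suc k) \<le> 1" using step.prems step.hyps(1) by simp
  then have "W (Suc k) \<noteq> z" using assms(3) by linarith
  then show ?case using step by (simp add: visits_Suc)
qed simp

(* W' runs through the path of W with every excursion of W into the sites \<le> 1 shortened to a single
   visit to 1. synced n' n says that W' at time n' is in the state of W at time n: the same position,
   which is \<ge> 1, the same number of visits to each site \<ge> 2, and no more visits to 1. *)
definition synced :: "nat \<Rightarrow> nat \<Rightarrow> bool" where
  "synced n' n \<longleftrightarrow> W' n' = W n \<and> W n \<ge> 1 \<and> (\<forall>z\<ge>2. V' n' z = V n z) \<and> V' n' 1 \<le> V n 1"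

lemma forced_coin_at_one: "1 \<le> k \<Longrightarrow> k \<le> V n 1 \<Longrightarrow> \<xi>' (1, k)"
  using late_coins_at_one[of k n] by (cases "k \<le> N") (auto simp: escape_coins_def)

lemma synced_Suc:
  assumes "synced n' n"
  shows "\<exists>m. synced (Suc n') m"
proof (cases "W n \<ge> 2")
  case True
  have unforced: "(W n, c) \<notin> escape_coins N" for c
    using True by (auto simp: escape_coins_def)
  have "V' n' (W n) = V n (W n)" using assms True by (simp add: synced_def)
  then have "\<xi>' (W' n', V' n' (W' n')) = \<xi> (W n, V n (W n))"
    using assms unforced by (simp add: synced_def)
  then have "W' (Suc n') = W (Suc n)"
    using assms by (simp add: cookie_walk_Suc[of 0 _ n'] cookie_walk_Suc[of 0 _ n] synced_def)
  moreover have "W (Suc n) \<ge> 1" using True cookie_walk_Suc_ge[of 0 \<xi> n] by simp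
  ultimately have "synced (Suc n') (Suc n)" using assms by (auto simp: synced_def visits_Suc)
  then show ?thesis by blast
next
  case False
  then have at_one: "W n = 1" "W' n' = 1" using assms by (simp_all add: synced_def)
  have "\<xi>' (1, V' n' 1)"
    using forced_coin_at_one[of "V' n' 1" n] visits_current_pos[of 0 \<xi>' n'] assms at_one
    by (simp add: synced_def)
  then have up: "W' (Suc n') = 2" using at_one by (simp add: cookie_walk_Suc[of 0 _ n'])
  obtain m where m: "m \<ge> n" "W m = 1" "W (Suc m) = 2" "\<forall>r. n \<le> r \<and> r \<le> m \<longrightarrow> W r \<le> 1"
    using excursion_from_one[OF at_one(1)] by blast
  have "V (Suc m) z = V' (Suc n') z" if "z \<ge> 2" for z
    using visits_unchanged_while_low[of n m z] m that assms up by (auto simp: visits_Suc synced_def)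
  moreover have "V' (Suc n') 1 \<le> V (Suc m) 1"
    using visits_mono[of n "Suc m" 0 \<xi> 1] m(1) assms up by (auto simp: visits_Suc synced_def)
  ultimately have "synced (Suc n') (Suc m)" using up m(3) by (auto simp: synced_def)
  then show ?thesis by blast
qed

lemma synced_1: "\<exists>n. synced 1 n"
proof -
  define n0 where "n0 = (LEAST n. W n = 1)"
  have n0: "W n0 = 1"
    unfolding n0_def by (rule LeastI[of _ "Suc t"]) (rule walk_Suc_t)
  have below: "W k \<le> 0" if "k < n0" for k
    using that
  proof (induction k)
    case (Suc k)
    have "W (Suc k) \<noteq> 1" using not_less_Least[of "Suc k" "\<lambda>n. W n = 1"] Suc.prems unfolding n0_def by auto
    then show ?case using Suc cookie_walk_Suc_le[of 0 \<xi> k] by simp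
  qed simp
  have "V n0 z = 0" if "z \<ge> 2" for z
  proof -
    have "z \<notin> W ` {..n0}"
      using below n0 that by (force simp: le_less)
    then show ?thesis by (simp add: visits_def set_cookie_hist)
  qed
  moreover have "W' 1 = 1" "V' 1 = (\<lambda>z. if z = 0 \<or> z = 1 then 1 else 0)"
    by (simp_all add: cookie_walk_Suc[of 0 _ 0] visits_Suc visits_0 escape_coins_def fun_eq_iff)
  moreover have "V n0 1 \<ge> 1" using visits_current_pos[of 0 \<xi> n0] n0 by simp
  ultimately have "synced 1 n0" using n0 by (auto simp: synced_def)
  then show ?thesis by blast
qed

lemma synced_exists: "n' \<ge> 1 \<Longrightarrow> \<exists>n. synced n' n"
proof (induction n' rule: dec_induct)
  case base
  show ?case by (rule synced_1)
next
  case (step n')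
  then show ?case using synced_Suc by blast
qed

lemma forced_walk_positive: "n > 0 \<Longrightarrow> W' n > 0"
  using synced_exists[of n] by (auto simp: synced_def)

end

definition coin_distr :: "(int \<Rightarrow> nat \<Rightarrow> real) \<Rightarrow> int \<times> nat \<Rightarrow> bool measure" where
  "coin_distr \<omega> c = measure_pmf (bernoulli_pmf (\<omega> (fst c) (snd c)))"

lemma coin_space_eq_PiM: "coin_space \<omega> = (\<Pi>\<^sub>M c\<in>UNIV. coin_distr \<omega> c)"
  unfolding coin_space_def coin_distr_def ..

interpretation coins: product_prob_space "coin_distr \<omega>" UNIV for \<omega>
  by (rule product_prob_spaceI) (simp add: coin_distr_def prob_space_measure_pmf)

lemma sets_coin_distr [simp]: "sets (coin_distr \<omega> c) = UNIV"
  by (simp add: coin_distr_def)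

lemma prob_space_coin_space: "prob_space (coin_space \<omega>)"
  unfolding coin_space_eq_PiM by (rule coins.P.prob_space_axioms)

lemma space_coin_space [simp]: "space (coin_space \<omega>) = UNIV"
  by (simp add: coin_space_eq_PiM space_PiM coin_distr_def)

lemma measurable_coin [measurable]: "(\<lambda>\<xi>. \<xi> c) \<in> coin_space \<omega> \<rightarrow>\<^sub>M count_space UNIV"
proof -
  have "(\<lambda>\<xi>. \<xi> c) \<in> coin_space \<omega> \<rightarrow>\<^sub>M coin_distr \<omega> c"
    unfolding coin_space_eq_PiM by (rule measurable_component_singleton) simp
  moreover have "coin_space \<omega> \<rightarrow>\<^sub>M coin_distr \<omega> c = coin_space \<omega> \<rightarrow>\<^sub>M count_space UNIV"
    by (rule measurable_cong_sets) (simp_all add: coin_distr_def)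
  ultimately show ?thesis by simp
qed

lemma measure_coin_space_Int_eq_mult:
  assumes "E \<in> sets (coin_space \<omega>)" "depends_only_on UNIV (- S) E"
    and "F \<in> sets (coin_space \<omega>)" "depends_only_on UNIV S F"
  shows "measure (coin_space \<omega>) (E \<inter> F) = measure (coin_space \<omega>) E * measure (coin_space \<omega>) F"
  using coins.measure_PiM_Int_eq_mult[of E \<omega> S F] assms
  by (simp add: coin_space_eq_PiM[symmetric])

lemma measure_coin_space_cylinder:
  assumes "finite J"
  shows "measure (coin_space \<omega>) {\<xi>. \<forall>j\<in>J. \<xi> j \<in> F j} = (\<Prod>j\<in>J. measure (coin_distr \<omega> j) (F j))"
proof -
  have "{\<xi>. \<forall>j\<in>J. \<xi> j \<in> F j} = prod_emb UNIV (coin_distr \<omega>) J (Pi\<^sub>E J F)"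
    by (auto simp: prod_emb_def PiE_iff space_PiM coin_distr_def)
  then show ?thesis
    using coins.measure_PiM_emb[of J F \<omega>] assms by (simp add: coin_space_eq_PiM)
qed

lemma measure_coin_distr_single:
  assumes "0 \<le> \<omega> (fst c) (snd c)" "\<omega> (fst c) (snd c) \<le> 1"
  shows "measure (coin_distr \<omega> c) {b} = (if b then \<omega> (fst c) (snd c) else 1 - \<omega> (fst c) (snd c))"
  using assms by (simp add: coin_distr_def measure_pmf_single)

lemma measure_coin_heads:
  assumes "0 \<le> \<omega> (fst c) (snd c)" "\<omega> (fst c) (snd c) \<le> 1"
  shows "measure (coin_space \<omega>) {\<xi>. \<xi> c} = \<omega> (fst c) (snd c)"
  using measure_coin_space_cylinder[of "{c}" \<omega> "\<lambda>_. {True}"] measure_coin_distr_single[of \<omega> c True, OF assms]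
  by simp

lemma depends_only_on_coin: "depends_only_on UNIV {c} {\<xi>. \<xi> c}"
  by (simp add: depends_only_on_def)

lemma sets_coin_space_Collect: "Measurable.pred (coin_space \<omega>) P \<Longrightarrow> {\<xi>. P \<xi>} \<in> sets (coin_space \<omega>)"
  unfolding pred_def by simp

lemma depends_only_on_cookie_hist:
  "depends_only_on UNIV (- {next_coin h}) {\<xi>. cookie_hist x \<xi> n = h}"
  unfolding depends_only_on_def
proof (intro ballI impI)
  fix \<xi> \<eta> assume "\<xi> \<in> {\<xi>. cookie_hist x \<xi> n = h}" and agree: "\<forall>c\<in>- {next_coin h}. \<eta> c = \<xi> c"
  then have h: "h = cookie_hist x \<xi> n" by simp
  have "cookie_hist x \<eta> n = cookie_hist x \<xi> n"
  proof (rule cookie_hist_cong)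
    fix k assume "k < n"
    then have "(cookie_walk x \<xi> k, visits x \<xi> k (cookie_walk x \<xi> k)) \<noteq> next_coin h"
      unfolding h next_coin_cookie_hist using visits_less_current[of k n x \<xi>] by auto
    then show "\<eta> (cookie_walk x \<xi> k, visits x \<xi> k (cookie_walk x \<xi> k))
             = \<xi> (cookie_walk x \<xi> k, visits x \<xi> k (cookie_walk x \<xi> k))"
      using agree by blast
  qed
  then show "\<eta> \<in> {\<xi>. cookie_hist x \<xi> n = h}" using h by simp
qed

lemma measurable_cookie_hist [measurable]:
  "(\<lambda>\<xi>. cookie_hist x \<xi> n) \<in> coin_space \<omega> \<rightarrow>\<^sub>M count_space UNIV"
proof (induction n)
  case (Suc n)
  have "(\<lambda>\<xi>. extend_hist h (\<xi> (next_coin h))) \<in> coin_space \<omega> \<rightarrow>\<^sub>M count_space UNIV" for h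
    by measurable
  from measurable_compose_countable'[OF this Suc] show ?case
    by (simp add: cookie_hist_Suc_extend)
qed simp

lemma measurable_cookie_walk [measurable]:
  "(\<lambda>\<xi>. cookie_walk x \<xi> n) \<in> coin_space \<omega> \<rightarrow>\<^sub>M count_space UNIV"
  unfolding cookie_walk_def by measurable

lemma measurable_cookie_path:
  "(\<lambda>\<xi> n. cookie_walk x \<xi> n) \<in> coin_space \<omega> \<rightarrow>\<^sub>M (\<Pi>\<^sub>M n\<in>UNIV. count_space UNIV)"
  by (rule measurable_PiM_single') (auto simp: space_PiM)

lemma measure_cookie_law:
  assumes "A \<in> sets (\<Pi>\<^sub>M n\<in>UNIV. count_space UNIV)"
  shows "measure (cookie_law \<omega> x) A = measure (coin_space \<omega>) {\<xi>. (\<lambda>n. cookie_walk x \<xi> n) \<in> A}"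
  unfolding cookie_law_def using assms measurable_cookie_path
  by (subst measure_distr) (auto simp: vimage_def)

(* The coin read at step n + 1 has not been read before, so it is independent of the history up to n. *)
lemma integral_cookie_hist_next_coin:
  fixes \<omega> :: "int \<Rightarrow> nat \<Rightarrow> real" and g :: "int list \<Rightarrow> bool \<Rightarrow> real"
  defines "q h \<equiv> measure (coin_space \<omega>) {\<xi>. \<xi> (next_coin h)}"
  shows "integrable (coin_space \<omega>) (\<lambda>\<xi>. g (cookie_hist x \<xi> n) (\<xi> (next_coin (cookie_hist x \<xi> n))))"
    and "(\<integral>\<xi>. g (cookie_hist x \<xi> n) (\<xi> (next_coin (cookie_hist x \<xi> n))) \<partial>coin_space \<omega>) =
      (\<Sum>h\<in>range (\<lambda>\<xi>. cookie_hist x \<xi> n). measure (coin_space \<omega>) {\<xi>. cookie_hist x \<xi> n = h} *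
         (q h * g h True + (1 - q h) * g h False))"
proof -
  interpret prob_space "coin_space \<omega>" by (rule prob_space_coin_space)
  let ?R = "range (\<lambda>\<xi>. cookie_hist x \<xi> n)"
  let ?E = "\<lambda>h. {\<xi>. cookie_hist x \<xi> n = h}"
  let ?T = "\<lambda>h. {\<xi>. \<xi> (next_coin h)}"
  let ?f = "\<lambda>h \<xi>. g h True * indicator (?E h \<inter> ?T h) \<xi> + g h False * indicator (?E h - ?T h) \<xi>"
  have decompose: "(\<lambda>\<xi>. g (cookie_hist x \<xi> n) (\<xi> (next_coin (cookie_hist x \<xi> n)))) = (\<lambda>\<xi>. \<Sum>h\<in>?R. ?f h \<xi>)"
  proof
    fix \<xi>
    have "(\<Sum>h\<in>?R. ?f h \<xi>) = (\<Sum>h\<in>?R. if cookie_hist x \<xi> n = h then g h (\<xi> (next_coin h)) else 0)"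
      by (intro sum.cong) (auto simp: indicator_def)
    also have "\<dots> = g (cookie_hist x \<xi> n) (\<xi> (next_coin (cookie_hist x \<xi> n)))"
      by (simp add: finite_range_cookie_hist)
    finally show "g (cookie_hist x \<xi> n) (\<xi> (next_coin (cookie_hist x \<xi> n))) = (\<Sum>h\<in>?R. ?f h \<xi>)" ..
  qed
  have sets_E: "?E h \<in> events" and sets_T: "?T h \<in> events" for h
    by (auto intro: sets_coin_space_Collect)
  then have sets_ET: "?E h \<inter> ?T h \<in> events" and sets_EmT: "?E h - ?T h \<in> events" for h
    by auto
  have integrable_indicator: "integrable (coin_space \<omega>) (indicator A :: _ \<Rightarrow> real)" if "A \<in> events" for A
    using that by (simp add: less_top[symmetric])
  have integrable_f: "integrable (coin_space \<omega>) (?f h)" for h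
    using integrable_indicator[OF sets_ET] integrable_indicator[OF sets_EmT] by simp
  then show "integrable (coin_space \<omega>) (\<lambda>\<xi>. g (cookie_hist x \<xi> n) (\<xi> (next_coin (cookie_hist x \<xi> n))))"
    unfolding decompose by (intro Bochner_Integration.integrable_sum)
  have heads: "prob (?E h \<inter> ?T h) = prob (?E h) * q h" for h
    unfolding q_def using sets_E sets_T
    by (rule measure_coin_space_Int_eq_mult[OF _ depends_only_on_cookie_hist _ depends_only_on_coin])
  have "(\<integral>\<xi>. g (cookie_hist x \<xi> n) (\<xi> (next_coin (cookie_hist x \<xi> n))) \<partial>coin_space \<omega>) =
      (\<Sum>h\<in>?R. g h True * prob (?E h \<inter> ?T h) + g h False * prob (?E h - ?T h))"
    unfolding decompose
  proof (subst Bochner_Integration.integral_sum[OF integrable_f], intro sum.cong refl)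
    fix h
    show "(\<integral>\<xi>. ?f h \<xi> \<partial>coin_space \<omega>) = g h True * prob (?E h \<inter> ?T h) + g h False * prob (?E h - ?T h)"
      using integrable_indicator[OF sets_ET] integrable_indicator[OF sets_EmT] by simp
  qed
  also have "\<dots> = (\<Sum>h\<in>?R. prob (?E h) * (q h * g h True + (1 - q h) * g h False))"
    by (intro sum.cong refl) (simp add: finite_measure_Diff' sets_E sets_T heads algebra_simps)
  finally show "(\<integral>\<xi>. g (cookie_hist x \<xi> n) (\<xi> (next_coin (cookie_hist x \<xi> n))) \<partial>coin_space \<omega>) =
      (\<Sum>h\<in>?R. prob (?E h) * (q h * g h True + (1 - q h) * g h False))" .
qed

lemma measurable_override_on_coin_space:
  "(\<lambda>\<xi>. override_on \<xi> b S) \<in> coin_space \<omega> \<rightarrow>\<^sub>M coin_space \<omega>"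
proof -
  have "(\<lambda>\<xi>. override_on \<xi> b S c) \<in> coin_space \<omega> \<rightarrow>\<^sub>M coin_distr \<omega> c" for c
  proof -
    have "(\<lambda>\<xi>. override_on \<xi> b S c) \<in> coin_space \<omega> \<rightarrow>\<^sub>M count_space UNIV"
      by (cases "c \<in> S") (simp_all add: override_on_def)
    moreover have "coin_space \<omega> \<rightarrow>\<^sub>M coin_distr \<omega> c = coin_space \<omega> \<rightarrow>\<^sub>M count_space UNIV"
      by (rule measurable_cong_sets) (simp_all add: coin_distr_def)
    ultimately show ?thesis by simp
  qed
  then have "(\<lambda>\<xi>. override_on \<xi> b S) \<in> coin_space \<omega> \<rightarrow>\<^sub>M (\<Pi>\<^sub>M c\<in>UNIV. coin_distr \<omega> c)"
    by (intro measurable_PiM_single') (auto simp: space_PiM coin_distr_def)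
  then show ?thesis using coin_space_eq_PiM[of \<omega>] by simp
qed

section \<open>The walk stopped at a level is a submartingale\<close>

lemma cookie_env_plus_heads_prob_ge:
  assumes "cookie_env_plus \<omega>" "i \<ge> 1"
  shows "measure (coin_space \<omega>) {\<xi>. \<xi> (z, i)} \<ge> 1/2"
proof -
  have "1/2 \<le> \<omega> z i" "\<omega> z i \<le> 1" using assms unfolding cookie_env_plus_def by auto
  then show ?thesis using measure_coin_heads[of \<omega> "(z, i)"] by simp
qed

definition stopped_at :: "int \<Rightarrow> int list \<Rightarrow> int" where
  "stopped_at L h = (if L \<in> set h then L else last h)"

lemma stopped_at_extend_hist:
  "L \<notin> set h \<Longrightarrow> stopped_at L (extend_hist h b) = (if b then last h + 1 else last h - 1)"
  by (auto simp: stopped_at_def extend_hist_def)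

lemma stopped_at_cookie_hist_le:
  assumes "x \<le> L"
  shows "stopped_at L (cookie_hist x \<xi> n) \<le> L"
proof (cases "L \<in> set (cookie_hist x \<xi> n)")
  case False
  have "cookie_walk x \<xi> n < L"
    using False
  proof (induction n)
    case (Suc n)
    then show ?case
      using cookie_walk_Suc_le[of x \<xi> n] by (fastforce simp: cookie_hist_Suc_append)
  qed (use assms in simp)
  then show ?thesis using False by (simp add: stopped_at_def cookie_walk_def)
qed (simp add: stopped_at_def)

lemma integral_stopped_at_Suc_ge:
  assumes env: "cookie_env_plus \<omega>"
  shows "(\<integral>\<xi>. stopped_at L (cookie_hist x \<xi> n) \<partial>coin_space \<omega>)
       \<le> (\<integral>\<xi>. stopped_at L (cookie_hist x \<xi> (Suc n)) \<partial>coin_space \<omega>)"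
proof -
  let ?q = "\<lambda>h. measure (coin_space \<omega>) {\<xi>. \<xi> (next_coin h)}"
  let ?P = "\<lambda>h. measure (coin_space \<omega>) {\<xi>. cookie_hist x \<xi> n = h}"
  let ?now = "\<lambda>h (b::bool). real_of_int (stopped_at L h)"
  let ?next = "\<lambda>h b. real_of_int (stopped_at L (extend_hist h b))"
  have "?q h * ?now h True + (1 - ?q h) * ?now h False \<le> ?q h * ?next h True + (1 - ?q h) * ?next h False"
    if reachable: "h \<in> range (\<lambda>\<xi>. cookie_hist x \<xi> n)" for h
  proof (cases "L \<in> set h")
    case True
    then show ?thesis by (simp add: stopped_at_def extend_hist_def algebra_simps)
  next
    case False
    obtain \<xi> where "h = cookie_hist x \<xi> n" using reachable by blast
    \<comment> \<open>the coins (z, 0) are never read, and \<open>cookie_env_plus\<close> does not constrain them\<close>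
    then have "snd (next_coin h) \<ge> 1"
      using visits_current_pos[of x \<xi> n] by (simp add: next_coin_cookie_hist)
    then have "?q h \<ge> 1/2"
      using cookie_env_plus_heads_prob_ge[OF env, of "snd (next_coin h)" "fst (next_coin h)"] by simp
    moreover have "stopped_at L h = last h" using False by (simp add: stopped_at_def)
    ultimately show ?thesis
      using False by (simp add: stopped_at_extend_hist algebra_simps)
  qed
  then have "(\<Sum>h\<in>range (\<lambda>\<xi>. cookie_hist x \<xi> n). ?P h * (?q h * ?now h True + (1 - ?q h) * ?now h False))
      \<le> (\<Sum>h\<in>range (\<lambda>\<xi>. cookie_hist x \<xi> n). ?P h * (?q h * ?next h True + (1 - ?q h) * ?next h False))"
    by (intro sum_mono mult_left_mono) simp_all
  then show ?thesis
    using integral_cookie_hist_next_coin(2)[of \<omega> ?now x n] integral_cookie_hist_next_coin(2)[of \<omega> ?next x n]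
    by (simp add: cookie_hist_Suc_extend)
qed

lemma integrable_stopped_at:
  "integrable (coin_space \<omega>) (\<lambda>\<xi>. real_of_int (stopped_at L (cookie_hist x \<xi> n)))"
  using integral_cookie_hist_next_coin(1)[of \<omega> "\<lambda>h b. real_of_int (stopped_at L h)" x n] by simp

lemma integral_stopped_at_ge:
  assumes "cookie_env_plus \<omega>"
  shows "x \<le> (\<integral>\<xi>. stopped_at L (cookie_hist x \<xi> n) \<partial>coin_space \<omega>)"
proof (induction n)
  case 0
  interpret prob_space "coin_space \<omega>" by (rule prob_space_coin_space)
  have "prob UNIV = 1" using prob_space by simp
  then show ?case by (simp add: stopped_at_def)
next
  case (Suc n)
  then show ?case using integral_stopped_at_Suc_ge[OF assms, of L x n] by linarith
qed

lemma prob_stopped_at_le: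
  fixes K :: real
  assumes env: "cookie_env_plus \<omega>" and "x \<le> L" "K > 0"
  shows "measure (coin_space \<omega>) {\<xi>. stopped_at L (cookie_hist x \<xi> n) \<le> x - K} \<le> (L - x) / K"
proof -
  interpret prob_space "coin_space \<omega>" by (rule prob_space_coin_space)
  let ?A = "{\<xi>. stopped_at L (cookie_hist x \<xi> n) \<le> x - K}"
  have A: "?A \<in> events"
    by (rule sets_coin_space_Collect) measurable
  have "stopped_at L (cookie_hist x \<xi> n) \<le> L - K * indicator ?A \<xi>" for \<xi>
    using stopped_at_cookie_hist_le[OF \<open>x \<le> L\<close>, of \<xi> n] \<open>x \<le> L\<close> by (auto simp: indicator_def)
  then have "(\<integral>\<xi>. stopped_at L (cookie_hist x \<xi> n) \<partial>coin_space \<omega>) \<le> (\<integral>\<xi>. L - K * indicator ?A \<xi> \<partial>coin_space \<omega>)"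
    using A by (intro integral_mono integrable_stopped_at) (auto simp: less_top[symmetric])
  also have "\<dots> = L - K * prob ?A"
    using A prob_space by (simp add: less_top[symmetric])
  finally have "K * prob ?A \<le> L - x"
    using integral_stopped_at_ge[OF env, of x L n] by linarith
  then show ?thesis using \<open>K > 0\<close> by (simp add: field_simps)
qed

lemma pred_cookie_walk_tendsto_at_bot [measurable]:
  "Measurable.pred (coin_space \<omega>) (\<lambda>\<xi>. filterlim (cookie_walk x \<xi>) at_bot sequentially)"
  unfolding filterlim_at_bot eventually_sequentially by measurable

lemma prob_bounded_above_tendsto_at_bot_le:
  fixes K :: nat
  assumes env: "cookie_env_plus \<omega>" and "x \<le> L" "K \<ge> 1"
  shows "measure (coin_space \<omega>)
           {\<xi>. (\<forall>k. cookie_walk x \<xi> k < L) \<and> filterlim (cookie_walk x \<xi>) at_bot sequentially}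
         \<le> real_of_int (L - x) / real K"
    (is "measure _ ?B \<le> _")
proof -
  interpret prob_space "coin_space \<omega>" by (rule prob_space_coin_space)
  define D where "D n = {\<xi>. (\<forall>k. cookie_walk x \<xi> k < L) \<and> (\<forall>m\<ge>n. cookie_walk x \<xi> m \<le> x - int K)}" for n
  have D_sets: "D n \<in> events" for n
    unfolding D_def by (rule sets_coin_space_Collect) measurable
  have "prob (D n) \<le> (L - x) / K" for n
  proof -
    have "D n \<subseteq> {\<xi>. stopped_at L (cookie_hist x \<xi> n) \<le> x - real K}"
      by (auto simp: D_def stopped_at_def set_cookie_hist cookie_walk_def[symmetric])
    then have "prob (D n) \<le> prob {\<xi>. stopped_at L (cookie_hist x \<xi> n) \<le> x - real K}"
      by (intro finite_measure_mono) (auto intro: sets_coin_space_Collect)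
    also have "\<dots> \<le> (L - x) / K"
      using prob_stopped_at_le[OF env, of x L "real K" n] assms by simp
    finally show ?thesis .
  qed
  moreover have "(\<lambda>n. prob (D n)) \<longlonglongrightarrow> prob (\<Union>n. D n)"
    using D_sets by (intro finite_Lim_measure_incseq) (auto simp: incseq_def D_def)
  ultimately have "prob (\<Union>n. D n) \<le> (L - x) / K"
    by (intro LIMSEQ_le_const2) auto
  moreover have "?B \<subseteq> (\<Union>n. D n)"
    by (auto simp: D_def filterlim_at_bot eventually_sequentially)
  then have "prob ?B \<le> prob (\<Union>n. D n)"
    using D_sets by (intro finite_measure_mono) auto
  ultimately show ?thesis by linarith
qed

lemma prob_bounded_above_tendsto_at_bot:
  assumes "cookie_env_plus \<omega>"
  shows "measure (coin_space \<omega>)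
           {\<xi>. (\<forall>k. cookie_walk x \<xi> k < L) \<and> filterlim (cookie_walk x \<xi>) at_bot sequentially} = 0"
    (is "measure _ ?B = 0")
proof (cases "x \<le> L")
  case True
  have "(\<lambda>K. real_of_int (L - x) / real K) \<longlonglongrightarrow> 0"
    by (rule lim_const_over_n)
  then have "measure (coin_space \<omega>) ?B \<le> 0"
    using prob_bounded_above_tendsto_at_bot_le[OF assms True]
    by (intro LIMSEQ_le_const exI[of _ 1]) auto
  then show ?thesis using measure_nonneg[of "coin_space \<omega>" ?B] by linarith
next
  case False
  have "\<not> (\<forall>k. cookie_walk x \<xi> k < L)" for \<xi>
    using False by (metis cookie_walk_0 less_le_not_le)
  then have "?B = {}" by blast
  then show ?thesis by (metis measure_empty)
qed

lemma AE_not_tendsto_at_bot: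
  assumes "cookie_env_plus \<omega>"
  shows "AE \<xi> in coin_space \<omega>. \<not> filterlim (cookie_walk x \<xi>) at_bot sequentially"
proof -
  interpret prob_space "coin_space \<omega>" by (rule prob_space_coin_space)
  have no_bounded_escape:
    "AE \<xi> in coin_space \<omega>. \<not> ((\<forall>k. cookie_walk x \<xi> k < L) \<and> filterlim (cookie_walk x \<xi>) at_bot sequentially)"
    for L
  proof -
    have "{\<xi>. (\<forall>k. cookie_walk x \<xi> k < L) \<and> filterlim (cookie_walk x \<xi>) at_bot sequentially} \<in> events"
      by (rule sets_coin_space_Collect) measurable
    then show ?thesis
      using prob_bounded_above_tendsto_at_bot[OF assms, of x L] prob_eq_0 by simp
  qed
  then have "AE \<xi> in coin_space \<omega>. \<forall>L. \<not> ((\<forall>k. cookie_walk x \<xi> k < L) \<and> filterlim (cookie_walk x \<xi>) at_bot sequentially)"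
    unfolding AE_all_countable using no_bounded_escape by blast
  then show ?thesis
    by eventually_elim (use bounded_above_if_filterlim_at_bot in blast)
qed

section \<open>Escape to the right\<close>

lemma prob_tails_from_eq_0:
  assumes env: "cookie_env_plus \<omega>"
  shows "measure (coin_space \<omega>) {\<xi>. \<forall>i\<ge>i0. \<not> \<xi> (z, i)} = 0"
    (is "measure _ ?A = 0")
proof -
  interpret prob_space "coin_space \<omega>" by (rule prob_space_coin_space)
  have "prob ?A \<le> (1/2) ^ m" for m
  proof -
    define J where "J = {z} \<times> {max 1 i0..<max 1 i0 + m}"
    have "finite J" by (simp add: J_def)
    have "?A \<subseteq> {\<xi>. \<forall>j\<in>J. \<xi> j \<in> {False}}" by (auto simp: J_def)
    then have "prob ?A \<le> prob {\<xi>. \<forall>j\<in>J. \<xi> j \<in> {False}}"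
      by (intro finite_measure_mono sets_coin_space_Collect) measurable
    also have "\<dots> = (\<Prod>j\<in>J. measure (coin_distr \<omega> j) {False})"
      using \<open>finite J\<close> by (rule measure_coin_space_cylinder)
    also have "\<dots> \<le> (\<Prod>j\<in>J. 1/2)"
    proof (rule prod_mono)
      fix j assume "j \<in> J"
      then have "1/2 \<le> \<omega> (fst j) (snd j)" "\<omega> (fst j) (snd j) \<le> 1"
        using env unfolding cookie_env_plus_def J_def by auto
      then show "0 \<le> measure (coin_distr \<omega> j) {False} \<and> measure (coin_distr \<omega> j) {False} \<le> 1/2"
        by (simp add: measure_coin_distr_single)
    qed
    also have "\<dots> = (1/2) ^ m" by (simp add: J_def card_cartesian_product)
    finally show ?thesis .
  qed
  moreover have "(\<lambda>m. (1/2::real) ^ m) \<longlonglongrightarrow> 0"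
    by (rule LIMSEQ_realpow_zero) simp_all
  ultimately have "prob ?A \<le> 0"
    by (intro LIMSEQ_le_const) auto
  then show ?thesis using measure_nonneg[of "coin_space \<omega>" ?A] by linarith
qed

lemma AE_infinitely_many_heads:
  assumes "cookie_env_plus \<omega>"
  shows "AE \<xi> in coin_space \<omega>. \<forall>z i0. \<exists>i\<ge>i0. \<xi> (z, i)"
proof -
  interpret prob_space "coin_space \<omega>" by (rule prob_space_coin_space)
  have "{\<xi>. \<forall>i\<ge>i0. \<not> \<xi> (z, i)} \<in> events" for z i0
    by (rule sets_coin_space_Collect) measurable
  then have "AE \<xi> in coin_space \<omega>. \<exists>i\<ge>i0. \<xi> (z, i)" for z i0
    using prob_tails_from_eq_0[OF assms, of i0 z] prob_eq_0 by fastforce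
  then show ?thesis by (simp add: AE_all_countable)
qed

lemma (in prob_space) exists_pos_prob_if_AE_ex:
  fixes B :: "'i::countable \<Rightarrow> 'a set"
  assumes "\<And>i. B i \<in> events" and "AE x in M. \<exists>i. x \<in> B i"
  shows "\<exists>i. prob (B i) > 0"
proof (rule ccontr)
  assume "\<not> (\<exists>i. prob (B i) > 0)"
  then have "AE x in M. x \<notin> B i" for i
    using prob_eq_0[OF assms(1)] measure_nonneg[of M "B i"] by (metis order_less_le)
  then have "AE x in M. \<forall>i. x \<notin> B i" by (simp add: AE_all_countable)
  with assms(2) have "AE x in M. False" by eventually_elim blast
  then show False by simp
qed

lemma escape_by_forcing_coins:
  assumes finite_zeros: "finite {n. cookie_walk 0 \<xi> n = 0}"
    and heads: "\<forall>z i0. \<exists>i\<ge>i0. \<xi> (z, i)"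
    and no_escape_left: "\<not> filterlim (cookie_walk 0 \<xi>) at_bot sequentially"
  shows "\<exists>N. \<forall>n>0. cookie_walk 0 (override_on \<xi> (\<lambda>_. True) (escape_coins N)) n > 0"
proof -
  obtain t where t: "cookie_walk 0 \<xi> t = 0"
    and sides: "(\<forall>n>t. cookie_walk 0 \<xi> n > 0) \<or> (\<forall>n>t. cookie_walk 0 \<xi> n < 0)"
    using last_visit_split[OF finite_zeros] by auto
  have "\<not> (\<forall>n>t. cookie_walk 0 \<xi> n < 0)"
  proof
    assume negative: "\<forall>n>t. cookie_walk 0 \<xi> n < 0"
    have "finite {n. cookie_walk 0 \<xi> n = z}" if "z \<le> 0" for z
      using infinite_visits_mono[OF _ that heads] finite_zeros by blast
    moreover have "eventually (\<lambda>n. cookie_walk 0 \<xi> n \<le> 0) sequentially"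
      using negative unfolding eventually_sequentially by (metis Suc_le_eq less_imp_le)
    ultimately show False
      using filterlim_at_bot_if_finite_level_sets no_escape_left by blast
  qed
  then have "positive_after_last_zero \<xi> t"
    using sides t by unfold_locales auto
  then show ?thesis
    using positive_after_last_zero.forced_walk_positive by blast
qed

lemma prob_escape_coins_heads_pos:
  assumes "cookie_env_plus \<omega>"
  shows "measure (coin_space \<omega>) {\<xi>. \<forall>c\<in>escape_coins N. \<xi> c \<in> {True}} > 0"
proof -
  have "measure (coin_space \<omega>) {\<xi>. \<forall>c\<in>escape_coins N. \<xi> c \<in> {True}}
      = (\<Prod>c\<in>escape_coins N. measure (coin_distr \<omega> c) {True})"
    by (rule measure_coin_space_cylinder) (simp add: escape_coins_def)
  also have "\<dots> > 0"
  proof (rule prod_pos)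
    fix c assume "c \<in> escape_coins N"
    then have "1/2 \<le> \<omega> (fst c) (snd c)" "\<omega> (fst c) (snd c) \<le> 1"
      using assms unfolding cookie_env_plus_def escape_coins_def by auto
    then show "measure (coin_distr \<omega> c) {True} > 0"
      by (simp add: measure_coin_distr_single)
  qed
  finally show ?thesis .
qed

lemma prob_stays_positive_pos:
  assumes env: "cookie_env_plus \<omega>"
    and transient: "measure (coin_space \<omega>) {\<xi>. infinite {n. cookie_walk 0 \<xi> n = 0}} = 0"
  shows "measure (coin_space \<omega>) {\<xi>. \<forall>n>0. cookie_walk 0 \<xi> n > 0} > 0"
proof -
  interpret prob_space "coin_space \<omega>" by (rule prob_space_coin_space)
  let ?A = "{\<xi>. \<forall>n>0. cookie_walk 0 \<xi> n > 0}"
  define B where "B N = {\<xi>. override_on \<xi> (\<lambda>_. True) (escape_coins N) \<in> ?A}" for N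
  define C where "C N = {\<xi>. \<forall>c\<in>escape_coins N. \<xi> c \<in> {True}}" for N
  have A: "?A \<in> events"
    by (rule sets_coin_space_Collect) measurable
  have B: "B N \<in> events" for N
    using measurable_sets[OF measurable_override_on_coin_space A] by (simp add: B_def vimage_def)
  have C: "C N \<in> events" for N
    unfolding C_def by (rule sets_coin_space_Collect) (simp add: escape_coins_def)
  have "AE \<xi> in coin_space \<omega>. finite {n. cookie_walk 0 \<xi> n = 0}"
    using transient prob_eq_0[OF sets_coin_space_Collect] by simp
  then have "AE \<xi> in coin_space \<omega>. \<exists>N. \<xi> \<in> B N"
    using AE_infinitely_many_heads[OF env] AE_not_tendsto_at_bot[OF env, of 0]
    by eventually_elim (use escape_by_forcing_coins in \<open>auto simp: B_def\<close>)
  then obtain N where "prob (B N) > 0"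
    using exists_pos_prob_if_AE_ex[of B] B by blast
  then have "0 < prob (B N) * prob (C N)"
    using prob_escape_coins_heads_pos[OF env, of N] unfolding C_def by (rule mult_pos_pos)
  also have "\<dots> = prob (B N \<inter> C N)"
    by (rule measure_coin_space_Int_eq_mult[OF B _ C, where S = "escape_coins N", symmetric])
      (auto simp: depends_only_on_def B_def C_def override_on_def)
  also have "\<dots> \<le> prob ?A"
  proof (rule finite_measure_mono[OF _ A], rule subsetI)
    fix \<xi> assume "\<xi> \<in> B N \<inter> C N"
    moreover from this have "override_on \<xi> (\<lambda>_. True) (escape_coins N) = \<xi>"
      by (auto simp: C_def override_on_def)
    ultimately show "\<xi> \<in> ?A" by (simp add: B_def)
  qed
  finally show ?thesis .
qed

theorem mainTheorem8:
  fixes \<omega> :: "int \<Rightarrow> nat \<Rightarrow> real"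
  assumes "cookie_env_plus \<omega>"
    and "omega_transient \<omega> 0"
  shows "measure (cookie_law \<omega> 0) {X. \<forall>n>0. X n > 0} > 0"
proof -
  let ?paths = "\<Pi>\<^sub>M (n::nat)\<in>UNIV. count_space (UNIV :: int set)"
  have space_paths: "space ?paths = UNIV" by (simp add: space_PiM)
  have "{X \<in> space ?paths. \<forall>m. \<exists>n>m. X n = 0} \<in> sets ?paths" by measurable
  then have "R_event 0 \<in> sets ?paths"
    by (simp add: R_event_def infinite_nat_iff_unbounded space_paths)
  moreover have "measure (cookie_law \<omega> 0) (R_event 0) = 0"
    using assms(2) by (simp add: omega_transient_def)
  ultimately have "measure (coin_space \<omega>) {\<xi>. infinite {n. cookie_walk 0 \<xi> n = 0}} = 0"
    by (simp add: measure_cookie_law R_event_def)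
  moreover have "{X \<in> space ?paths. \<forall>n>0. X n > 0} \<in> sets ?paths" by measurable
  ultimately show ?thesis
    using prob_stays_positive_pos[OF assms(1)] by (simp add: measure_cookie_law space_paths)
qed

end
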